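(* For any integer $m\ge1$ and all $z,\xi\in\mathbb{B}_N$, $$(1-|\xi|^2)^{-m-1}p_m(\widetilde\Delta_\xi)\Big\{\frac{1-|\xi|^2}{|1-\langle z,\xi\rangle|^2}\Big\}=\big(|E_z|^2-\Delta_z\big)\Big\{\frac{(1-|z|^2)^{m+1}}{|1-\langle z,\xi\rangle|^{2(m+1)}}\Big\},$$ where $p_m(t)=\frac{1}{(m!)^2}\prod_{j=0}^m\big(j(j-N)-t\big)$. As a consequence, as differential operators on smooth functions on $\mathbb{B}_N$, $$(m!)^2(1-|\xi|^2)^{-m-1}p_m(\widetilde\Delta_\xi)=\big(|E_\xi+m|^2-\Delta_\xi\big)\cdots\big(|E_\xi+1|^2-\Delta_\xi\big)\big(|E_\xi|^2-\Delta_\xi\big).$$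
   Context: $\mathbb{B}_N$ is the unit ball of $\mathbb{C}^N$ and $\langle z,\xi\rangle=\sum_j z_j\bar\xi_j$. $E_z=\sum_j z_j\partial/\partial z_j$, $\bar E_z=\sum_j\bar z_j\partial/\partial\bar z_j$, $\Delta_z=\sum_j\partial^2/\partial z_j\partial\bar z_j$, $|E_z+s|^2=(E_z+s)(\bar E_z+s)$ for real $s$; subscript $\xi$ means acting in the variable $\xi$. The invariant Laplacian is $\widetilde\Delta=(1-|z|^2)(\Delta_z-|E_z|^2)$ on $C^2(\mathbb{B}_N)$, and $p_m(\widetilde\Delta)$ is the polynomial $p_m$ evaluated at this operator (composition powers); $(1-|\xi|^2)^{-m-1}$ acts by multiplication after applying $p_m(\widetilde\Delta_\xi)$. *)

theory Defs
  imports "HOL-Analysis.Analysis"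
begin

text \<open>Points of C^N are vectors of type complex^'n, N = CARD('n).\<close>

type_synonym 'n cfun = "complex^'n \<Rightarrow> complex"

definition cinner :: "complex^'n::finite \<Rightarrow> complex^'n \<Rightarrow> complex" where
  "cinner z w = (\<Sum>j\<in>UNIV. z$j * cnj (w$j))"

definition dx :: "'n::finite \<Rightarrow> 'n cfun \<Rightarrow> 'n cfun" where
  "dx j f z = frechet_derivative f (at z) (axis j 1)"

definition dy :: "'n::finite \<Rightarrow> 'n cfun \<Rightarrow> 'n cfun" where
  "dy j f z = frechet_derivative f (at z) (axis j \<i>)"

definition dz :: "'n::finite \<Rightarrow> 'n cfun \<Rightarrow> 'n cfun" where
  "dz j f z = (dx j f z - \<i> * dy j f z) / 2"

definition dzb :: "'n::finite \<Rightarrow> 'n cfun \<Rightarrow> 'n cfun" where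
  "dzb j f z = (dx j f z + \<i> * dy j f z) / 2"

definition lap :: "'n::finite cfun \<Rightarrow> 'n cfun" where
  "lap f z = (\<Sum>j\<in>UNIV. dz j (dzb j f) z)"

definition Eop :: "real \<Rightarrow> 'n::finite cfun \<Rightarrow> 'n cfun" where
  "Eop s f z = (\<Sum>j\<in>UNIV. z$j * dz j f z) + of_real s * f z"

definition Ebop :: "real \<Rightarrow> 'n::finite cfun \<Rightarrow> 'n cfun" where
  "Ebop s f z = (\<Sum>j\<in>UNIV. cnj (z$j) * dzb j f z) + of_real s * f z"

text \<open>|E + s|^2 = (E + s)(Ebar + s)\<close>
definition absE2 :: "real \<Rightarrow> 'n::finite cfun \<Rightarrow> 'n cfun" where
  "absE2 s f = Eop s (Ebop s f)"

definition invlap :: "'n::finite cfun \<Rightarrow> 'n cfun" where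
  "invlap f z = of_real (1 - (norm z)^2) * (lap f z - absE2 0 f z)"

text \<open>prod_{j=0}^k (j(j-N) - invlap), as an operator\<close>
fun pprod :: "nat \<Rightarrow> 'n::finite cfun \<Rightarrow> 'n cfun" where
  "pprod 0 f = (\<lambda>z. - invlap f z)"
| "pprod (Suc j) f = (let g = pprod j f in
     (\<lambda>z. of_real (real (Suc j) * (real (Suc j) - real CARD('n))) * g z - invlap g z))"

definition pm_op :: "nat \<Rightarrow> 'n::finite cfun \<Rightarrow> 'n cfun" where
  "pm_op m f z = pprod m f z / (of_nat (fact m))^2"

definition Qop :: "nat \<Rightarrow> 'n::finite cfun \<Rightarrow> 'n cfun" where
  "Qop k f z = absE2 (real k) f z - lap f z"

fun Qprod :: "nat \<Rightarrow> 'n::finite cfun \<Rightarrow> 'n cfun" where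
  "Qprod 0 f = Qop 0 f"
| "Qprod (Suc k) f = Qop (Suc k) (Qprod k f)"

fun Ck_on :: "nat \<Rightarrow> (complex^'n::finite) set \<Rightarrow> 'n cfun \<Rightarrow> bool" where
  "Ck_on 0 S f = continuous_on S f"
| "Ck_on (Suc k) S f = (f differentiable_on S \<and> continuous_on S f \<and>
     (\<forall>v. Ck_on k S (\<lambda>z. frechet_derivative f (at z) v)))"

definition smooth_on :: "(complex^'n::finite) set \<Rightarrow> 'n cfun \<Rightarrow> bool" where
  "smooth_on S f = (\<forall>k. Ck_on k S f)"

end

theory Submission
  imports Defs
begin

text \<open>Write rho u = 1 - |u|^2 and omega_a u = 1 - <u, a>. The heart of the matter is the commutation rule
  (|E|^2 - Delta)(rho^k h) = rho^k (|E + k|^2 - Delta) h - k (k - N) rho^(k-1) h.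
  Since the invariant Laplacian is -rho (|E|^2 - Delta), induction on m turns
  prod_{j=0}^m (j (j - N) - invlap) into rho^(m+1) (|E + m|^2 - Delta) ... (|E|^2 - Delta),
  which is the second claim. For the first, both kernels are monomials
  rho^e omega_a^(-p) conj(omega_a)^(-q), on which E, Ebar and Delta act by explicit recurrences:
  the operator product sends the kernel at z to a combination of two diagonal monomials, and the
  symmetry conj(omega_z xi) = omega_xi z identifies that combination with (|E|^2 - Delta) applied
  to the kernel at xi.\<close>

section \<open>Directional and Wirtinger derivatives\<close>

lemma frechet_derivative_cong_open:
  assumes "open S" "u \<in> S" "\<And>x. x \<in> S \<Longrightarrow> f x = g x"
  shows "frechet_derivative f (at u) = frechet_derivative g (at u)"
proof -
  have "(f has_derivative D) (at u) \<longleftrightarrow> (g has_derivative D) (at u)" for D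
    using has_derivative_transform_within_open[OF _ assms(1,2)] assms(3) by metis
  then show ?thesis unfolding frechet_derivative_def by simp
qed

lemma differentiable_cong_open:
  assumes "open S" "u \<in> S" "\<And>x. x \<in> S \<Longrightarrow> f x = g x" "f differentiable (at u)"
  shows "g differentiable (at u)"
  using assms unfolding differentiable_def by (meson has_derivative_transform_within_open)

lemmas has_derivative_frechet = frechet_derivative_works[THEN iffD1]

definition dderiv :: "'a::real_normed_vector \<Rightarrow> ('a \<Rightarrow> 'b::real_normed_vector) \<Rightarrow> 'a \<Rightarrow> 'b" where
  "dderiv v f u = frechet_derivative f (at u) v"

lemma dderiv_eqI: "(f has_derivative f') (at u) \<Longrightarrow> dderiv v f u = f' v"
  unfolding dderiv_def by (metis frechet_derivative_at)

lemma dderiv_cong_open: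
  "open S \<Longrightarrow> u \<in> S \<Longrightarrow> (\<And>x. x \<in> S \<Longrightarrow> f x = g x) \<Longrightarrow> dderiv v f u = dderiv v g u"
  unfolding dderiv_def using frechet_derivative_cong_open by metis

lemma dderiv_const: "dderiv v (\<lambda>x. c) u = 0"
  by (rule dderiv_eqI[OF has_derivative_const, simplified])

lemma dderiv_add:
  assumes "f differentiable (at u)" "g differentiable (at u)"
  shows "dderiv v (\<lambda>x. f x + g x) u = dderiv v f u + dderiv v g u"
  using dderiv_eqI[OF has_derivative_add[OF assms[THEN has_derivative_frechet]]]
  by (simp add: dderiv_def)

lemma dderiv_diff:
  assumes "f differentiable (at u)" "g differentiable (at u)"
  shows "dderiv v (\<lambda>x. f x - g x) u = dderiv v f u - dderiv v g u"
  using dderiv_eqI[OF has_derivative_diff[OF assms[THEN has_derivative_frechet]]]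
  by (simp add: dderiv_def)

lemma dderiv_mult:
  fixes f g :: "'a::real_normed_vector \<Rightarrow> 'b::real_normed_algebra"
  assumes "f differentiable (at u)" "g differentiable (at u)"
  shows "dderiv v (\<lambda>x. f x * g x) u = f u * dderiv v g u + dderiv v f u * g u"
  using dderiv_eqI[OF has_derivative_mult[OF assms[THEN has_derivative_frechet]]]
  by (simp add: dderiv_def)

lemma dderiv_power:
  fixes f :: "'a::real_normed_vector \<Rightarrow> 'b::real_normed_field"
  assumes "f differentiable (at u)"
  shows "dderiv v (\<lambda>x. f x ^ n) u = of_nat n * f u ^ (n - 1) * dderiv v f u"
  using dderiv_eqI[OF has_derivative_power[OF has_derivative_frechet[OF assms]]]
  by (simp add: dderiv_def ac_simps)

lemma dderiv_inverse_power:
  fixes f :: "'a::real_normed_vector \<Rightarrow> 'b::real_normed_field"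
  assumes "f differentiable (at u)" "f u \<noteq> 0"
  shows "dderiv v (\<lambda>x. inverse (f x) ^ n) u = - of_nat n * inverse (f u) ^ Suc n * dderiv v f u"
proof -
  have "((\<lambda>x. inverse (f x)) has_derivative
      (\<lambda>h. - (inverse (f u) * frechet_derivative f (at u) h * inverse (f u)))) (at u)"
    using Deriv.has_derivative_inverse[OF assms(2) has_derivative_frechet[OF assms(1)]] .
  from dderiv_eqI[OF has_derivative_power[OF this, of n], of v] show ?thesis
    by (cases n) (simp_all add: dderiv_def algebra_simps)
qed

lemma dderiv_linear: "bounded_linear L \<Longrightarrow> dderiv v L u = L v"
  by (rule dderiv_eqI[OF bounded_linear_imp_has_derivative])

lemmas has_derivative_vec_nth = bounded_linear.has_derivative[OF bounded_linear_vec_nth]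

lemma coord_differentiable [simp]: "(\<lambda>x. x$k) differentiable F"
  using has_derivative_vec_nth[OF has_derivative_ident] unfolding differentiable_def by blast

lemma cinner_zero [simp]: "cinner 0 u = 0" "cinner u 0 = 0"
  unfolding cinner_def by simp_all

lemma cinner_cnj_swap: "cinner u v = cnj (cinner v u)"
  unfolding cinner_def by (simp add: mult.commute)

lemma cinner_axis_left: "cinner (axis j c) u = c * cnj (u$j)"
  unfolding cinner_def axis_def by (simp add: if_distrib if_distribR cong: if_cong)

lemma cinner_axis_right: "cinner u (axis j c) = u$j * cnj c"
  unfolding cinner_def axis_def by (simp add: if_distrib cong: if_cong)

lemma has_derivative_cinner [derivative_intros]:
  assumes "(f has_derivative f') (at x)" "(g has_derivative g') (at x)"
  shows "((\<lambda>x. cinner (f x) (g x)) has_derivative (\<lambda>h. cinner (f' h) (g x) + cinner (f x) (g' h))) (at x)"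
  unfolding cinner_def
  by (auto intro!: derivative_eq_intros has_derivative_vec_nth assms simp: sum.distrib algebra_simps)

lemma dz_dderiv: "dz j f u = (dderiv (axis j 1) f u - \<i> * dderiv (axis j \<i>) f u) / 2"
  unfolding dz_def dx_def dy_def dderiv_def ..

lemma dzb_dderiv: "dzb j f u = (dderiv (axis j 1) f u + \<i> * dderiv (axis j \<i>) f u) / 2"
  unfolding dzb_def dx_def dy_def dderiv_def ..

lemma dz_cong_open: "open S \<Longrightarrow> u \<in> S \<Longrightarrow> (\<And>x. x \<in> S \<Longrightarrow> f x = g x) \<Longrightarrow> dz j f u = dz j g u"
  unfolding dz_dderiv using dderiv_cong_open[of S u f g] by simp

lemma dzb_cong_open: "open S \<Longrightarrow> u \<in> S \<Longrightarrow> (\<And>x. x \<in> S \<Longrightarrow> f x = g x) \<Longrightarrow> dzb j f u = dzb j g u"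
  unfolding dzb_dderiv using dderiv_cong_open[of S u f g] by simp

lemma dz_add: "f differentiable (at u) \<Longrightarrow> g differentiable (at u) \<Longrightarrow>
   dz j (\<lambda>x. f x + g x) u = dz j f u + dz j g u"
  unfolding dz_dderiv by (simp add: dderiv_add field_simps)

lemma dzb_add: "f differentiable (at u) \<Longrightarrow> g differentiable (at u) \<Longrightarrow>
   dzb j (\<lambda>x. f x + g x) u = dzb j f u + dzb j g u"
  unfolding dzb_dderiv by (simp add: dderiv_add field_simps)

lemma dz_diff: "f differentiable (at u) \<Longrightarrow> g differentiable (at u) \<Longrightarrow>
   dz j (\<lambda>x. f x - g x) u = dz j f u - dz j g u"
  unfolding dz_dderiv by (simp add: dderiv_diff field_simps)

lemma dz_mult: "f differentiable (at u) \<Longrightarrow> g differentiable (at u) \<Longrightarrow>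
   dz j (\<lambda>x. f x * g x) u = f u * dz j g u + dz j f u * g u"
  unfolding dz_dderiv by (simp add: dderiv_mult field_simps)

lemma dzb_mult: "f differentiable (at u) \<Longrightarrow> g differentiable (at u) \<Longrightarrow>
   dzb j (\<lambda>x. f x * g x) u = f u * dzb j g u + dzb j f u * g u"
  unfolding dzb_dderiv by (simp add: dderiv_mult field_simps)

lemma dz_cmult: "f differentiable (at u) \<Longrightarrow> dz j (\<lambda>x. c * f x) u = c * dz j f u"
  using dz_mult[of "\<lambda>x. c" u f j] by (simp add: dz_dderiv dderiv_const)

lemma dzb_cmult: "f differentiable (at u) \<Longrightarrow> dzb j (\<lambda>x. c * f x) u = c * dzb j f u"
  using dzb_mult[of "\<lambda>x. c" u f j] by (simp add: dzb_dderiv dderiv_const)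

lemma dz_power: "f differentiable (at u) \<Longrightarrow> dz j (\<lambda>x. f x ^ n) u = of_nat n * f u ^ (n - 1) * dz j f u"
  unfolding dz_dderiv by (simp add: dderiv_power field_simps)

lemma dzb_power: "f differentiable (at u) \<Longrightarrow> dzb j (\<lambda>x. f x ^ n) u = of_nat n * f u ^ (n - 1) * dzb j f u"
  unfolding dzb_dderiv by (simp add: dderiv_power field_simps)

lemma dz_coord: "dz j (\<lambda>x. x$k) u = (if k = j then 1 else 0)"
  unfolding dz_dderiv by (simp add: dderiv_linear[OF bounded_linear_vec_nth] axis_def)

section \<open>Locality and linearity of the operators\<close>

lemma Eop_cong_open:
  "open S \<Longrightarrow> u \<in> S \<Longrightarrow> (\<And>x. x \<in> S \<Longrightarrow> f x = g x) \<Longrightarrow> Eop s f u = Eop s g u"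
  unfolding Eop_def using dz_cong_open[of S u f g] by simp

lemma Ebop_cong_open:
  "open S \<Longrightarrow> u \<in> S \<Longrightarrow> (\<And>x. x \<in> S \<Longrightarrow> f x = g x) \<Longrightarrow> Ebop s f u = Ebop s g u"
  unfolding Ebop_def using dzb_cong_open[of S u f g] by simp

lemma absE2_cong_open:
  "open S \<Longrightarrow> u \<in> S \<Longrightarrow> (\<And>x. x \<in> S \<Longrightarrow> f x = g x) \<Longrightarrow> absE2 s f u = absE2 s g u"
  unfolding absE2_def by (rule Eop_cong_open[of S]) (auto intro: Ebop_cong_open[of S])

lemma lap_cong_open:
  "open S \<Longrightarrow> u \<in> S \<Longrightarrow> (\<And>x. x \<in> S \<Longrightarrow> f x = g x) \<Longrightarrow> lap f u = lap g u"
  unfolding lap_def by (intro sum.cong refl dz_cong_open[of S]) (auto intro: dzb_cong_open[of S])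

lemma Qop_cong_open:
  "open S \<Longrightarrow> u \<in> S \<Longrightarrow> (\<And>x. x \<in> S \<Longrightarrow> f x = g x) \<Longrightarrow> Qop k f u = Qop k g u"
  unfolding Qop_def using absE2_cong_open[of S u f g] lap_cong_open[of S u f g] by simp

lemma invlap_cong_open:
  "open S \<Longrightarrow> u \<in> S \<Longrightarrow> (\<And>x. x \<in> S \<Longrightarrow> f x = g x) \<Longrightarrow> invlap f u = invlap g u"
  unfolding invlap_def using absE2_cong_open[of S u f g] lap_cong_open[of S u f g] by simp

lemma Eop_add: "f differentiable (at u) \<Longrightarrow> g differentiable (at u) \<Longrightarrow>
   Eop s (\<lambda>x. f x + g x) u = Eop s f u + Eop s g u"
  unfolding Eop_def by (simp add: dz_add algebra_simps sum.distrib)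

lemma Eop_diff: "f differentiable (at u) \<Longrightarrow> g differentiable (at u) \<Longrightarrow>
   Eop s (\<lambda>x. f x - g x) u = Eop s f u - Eop s g u"
  unfolding Eop_def by (simp add: dz_diff algebra_simps sum_subtractf)

lemma Eop_cmult: "f differentiable (at u) \<Longrightarrow> Eop s (\<lambda>x. c * f x) u = c * Eop s f u"
  unfolding Eop_def by (simp add: dz_cmult algebra_simps sum_distrib_left)

lemma Ebop_add: "f differentiable (at u) \<Longrightarrow> g differentiable (at u) \<Longrightarrow>
   Ebop s (\<lambda>x. f x + g x) u = Ebop s f u + Ebop s g u"
  unfolding Ebop_def by (simp add: dzb_add algebra_simps sum.distrib)

lemma Ebop_cmult: "f differentiable (at u) \<Longrightarrow> Ebop s (\<lambda>x. c * f x) u = c * Ebop s f u"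
  unfolding Ebop_def by (simp add: dzb_cmult algebra_simps sum_distrib_left)

definition wirtinger_C2_on :: "(complex^'n::finite) set \<Rightarrow> 'n cfun \<Rightarrow> bool" where
  "wirtinger_C2_on S h \<longleftrightarrow> (\<forall>u\<in>S. h differentiable (at u) \<and>
     (\<forall>j. dz j h differentiable (at u) \<and> dzb j h differentiable (at u)))"

lemma wirtinger_C2_onD:
  assumes "wirtinger_C2_on S h" "u \<in> S"
  shows "h differentiable (at u)" "dz j h differentiable (at u)" "dzb j h differentiable (at u)"
  using assms unfolding wirtinger_C2_on_def by auto

lemma Ebop_differentiable:
  assumes "wirtinger_C2_on S h" "u \<in> S"
  shows "Ebop s h differentiable (at u)"
  unfolding Ebop_def[abs_def] using wirtinger_C2_onD[OF assms]
  by (intro differentiable_add differentiable_sum ballI differentiable_mult differentiable_const)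
    (simp_all add: differentiable_cnj_iff)

lemma wirtinger_C2_on_cong_open:
  assumes S: "open S" and eq: "\<And>x. x \<in> S \<Longrightarrow> f x = g x" and f: "wirtinger_C2_on S f"
  shows "wirtinger_C2_on S g"
  unfolding wirtinger_C2_on_def
proof (intro ballI conjI allI)
  fix u j assume u: "u \<in> S"
  show "g differentiable (at u)"
    by (rule differentiable_cong_open[OF S u eq wirtinger_C2_onD(1)[OF f u]])
  show "dz j g differentiable (at u)"
    by (rule differentiable_cong_open[OF S u _ wirtinger_C2_onD(2)[OF f u]]) (rule dz_cong_open[OF S _ eq])
  show "dzb j g differentiable (at u)"
    by (rule differentiable_cong_open[OF S u _ wirtinger_C2_onD(3)[OF f u]]) (rule dzb_cong_open[OF S _ eq])
qed

lemma wirtinger_C2_on_lincomb: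
  assumes S: "open S" and f: "wirtinger_C2_on S f" and g: "wirtinger_C2_on S g"
  shows "wirtinger_C2_on S (\<lambda>x. c * f x + d * g x)"
  unfolding wirtinger_C2_on_def
proof (intro ballI conjI allI)
  fix u j assume u: "u \<in> S"
  note df = wirtinger_C2_onD[OF f] and dg = wirtinger_C2_onD[OF g]
  have cf: "(\<lambda>x. c * f x) differentiable (at x)" and cg: "(\<lambda>x. d * g x) differentiable (at x)"
    if "x \<in> S" for x
    using df(1)[OF that] dg(1)[OF that] by simp_all
  show "(\<lambda>x. c * f x + d * g x) differentiable (at u)"
    using cf[OF u] cg[OF u] by (rule differentiable_add)
  have "dz j (\<lambda>x. c * f x + d * g x) x = c * dz j f x + d * dz j g x"
    and "dzb j (\<lambda>x. c * f x + d * g x) x = c * dzb j f x + d * dzb j g x" if "x \<in> S" for x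
    using cf[OF that] cg[OF that] df(1)[OF that] dg(1)[OF that]
    by (simp_all add: dz_add dz_cmult dzb_add dzb_cmult)
  moreover have "(\<lambda>x. c * dz j f x + d * dz j g x) differentiable (at u)"
    and "(\<lambda>x. c * dzb j f x + d * dzb j g x) differentiable (at u)"
    using df(2,3)[OF u] dg(2,3)[OF u] by simp_all
  ultimately show "dz j (\<lambda>x. c * f x + d * g x) differentiable (at u)"
    and "dzb j (\<lambda>x. c * f x + d * g x) differentiable (at u)"
    using differentiable_cong_open[OF S u] by (metis (no_types, lifting))+
qed

lemma Qop_lincomb:
  assumes S: "open S" and f: "wirtinger_C2_on S f" and g: "wirtinger_C2_on S g" and u: "u \<in> S"
  shows "Qop k (\<lambda>x. c * f x + d * g x) u = c * Qop k f u + d * Qop k g u"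
proof -
  note df = wirtinger_C2_onD[OF f] and dg = wirtinger_C2_onD[OF g]
  have "absE2 (real k) (\<lambda>x. c * f x + d * g x) u =
      Eop (real k) (\<lambda>x. c * Ebop (real k) f x + d * Ebop (real k) g x) u"
    unfolding absE2_def using df(1) dg(1)
    by (intro Eop_cong_open[OF S u]) (simp add: Ebop_add Ebop_cmult)
  also have "\<dots> = c * absE2 (real k) f u + d * absE2 (real k) g u"
    unfolding absE2_def using Ebop_differentiable[OF f u] Ebop_differentiable[OF g u]
    by (simp add: Eop_add Eop_cmult)
  finally have A: "absE2 (real k) (\<lambda>x. c * f x + d * g x) u = \<dots>" .
  have "lap (\<lambda>x. c * f x + d * g x) u = (\<Sum>j\<in>UNIV. dz j (\<lambda>x. c * dzb j f x + d * dzb j g x) u)"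
    unfolding lap_def using df(1) dg(1)
    by (intro sum.cong refl dz_cong_open[OF S u]) (simp add: dzb_add dzb_cmult)
  also have "\<dots> = c * lap f u + d * lap g u"
    unfolding lap_def using df(3)[OF u] dg(3)[OF u]
    by (simp add: dz_add dz_cmult sum.distrib sum_distrib_left)
  finally show ?thesis unfolding Qop_def A by (simp add: algebra_simps)
qed

section \<open>Commuting the operators with powers of the defining function\<close>

definition rho :: "complex^'n::finite \<Rightarrow> complex" where
  "rho u = 1 - cinner u u"

lemma rho_eq_norm: "rho u = of_real (1 - (norm u)^2)"
proof -
  have "of_real ((norm u)^2) = (\<Sum>i\<in>UNIV. complex_of_real ((cmod (u$i))^2))"
    unfolding norm_vec_def L2_set_def by (simp add: sum_nonneg del: of_real_power)
  also have "\<dots> = cinner u u"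
    unfolding cinner_def by (simp only: complex_norm_square)
  finally show ?thesis
    unfolding rho_def by simp
qed

lemma rho_nonzero:
  assumes "norm u < 1"
  shows "rho u \<noteq> 0"
proof -
  have "(norm u)^2 < 1" using assms by (simp add: power_less_one_iff)
  then show ?thesis unfolding rho_eq_norm of_real_eq_0_iff by simp
qed

lemma sum_coord_cnj_eq: "(\<Sum>j\<in>UNIV. u$j * cnj (u$j)) = 1 - rho u"
  unfolding rho_def cinner_def by simp

lemma has_derivative_rho: "(rho has_derivative (\<lambda>h. - (cinner h u + cinner u h))) (at u)"
  unfolding rho_def[abs_def] by (auto intro!: derivative_eq_intros)

lemma rho_differentiable [simp]: "rho differentiable (at u)"
  using has_derivative_rho unfolding differentiable_def by blast

lemma dz_rho: "dz j rho u = - cnj (u$j)"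
  unfolding dz_dderiv dderiv_eqI[OF has_derivative_rho]
  by (simp add: cinner_axis_left cinner_axis_right field_simps)

lemma dzb_rho: "dzb j rho u = - u$j"
  unfolding dzb_dderiv dderiv_eqI[OF has_derivative_rho]
  by (simp add: cinner_axis_left cinner_axis_right field_simps)

lemma dz_rho_power: "dz j (\<lambda>x. rho x ^ k) u = - of_nat k * rho u ^ (k - 1) * cnj (u$j)"
  by (simp add: dz_power dz_rho)

lemma dzb_rho_power: "dzb j (\<lambda>x. rho x ^ k) u = - of_nat k * rho u ^ (k - 1) * u$j"
  by (simp add: dzb_power dzb_rho)

lemma of_nat_mult_power_pred: "of_nat k * x ^ (k - 1) * x = of_nat k * (x::'a::comm_semiring_1) ^ k"
  by (cases k) (simp_all add: algebra_simps)

lemma Eop_rho_power_mult: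
  assumes "g differentiable (at u)"
  shows "Eop s (\<lambda>x. rho x ^ k * g x) u =
    rho u ^ k * Eop (s + real k) g u - of_nat k * rho u ^ (k - 1) * g u"
proof -
  have "(\<Sum>j\<in>UNIV. u$j * dz j (\<lambda>x. rho x ^ k * g x) u) =
     (\<Sum>j\<in>UNIV. rho u ^ k * (u$j * dz j g u) - (of_nat k * rho u ^ (k - 1) * g u) * (u$j * cnj (u$j)))"
    using assms by (intro sum.cong) (simp_all add: dz_mult dz_rho_power algebra_simps)
  also have "\<dots> = rho u ^ k * (\<Sum>j\<in>UNIV. u$j * dz j g u) - of_nat k * rho u ^ (k - 1) * g u * (1 - rho u)"
    by (simp add: sum_subtractf sum_distrib_left sum_coord_cnj_eq[symmetric])
  finally show ?thesis
    unfolding Eop_def using of_nat_mult_power_pred[of k "rho u"] by (auto simp: algebra_simps)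
qed

lemma Ebop_rho_power_mult:
  assumes "g differentiable (at u)"
  shows "Ebop s (\<lambda>x. rho x ^ k * g x) u =
    rho u ^ k * Ebop (s + real k) g u - of_nat k * rho u ^ (k - 1) * g u"
proof -
  have "(\<Sum>j\<in>UNIV. cnj (u$j) * dzb j (\<lambda>x. rho x ^ k * g x) u) =
     (\<Sum>j\<in>UNIV. rho u ^ k * (cnj (u$j) * dzb j g u) - (of_nat k * rho u ^ (k - 1) * g u) * (u$j * cnj (u$j)))"
    using assms by (intro sum.cong) (simp_all add: dzb_mult dzb_rho_power algebra_simps)
  also have "\<dots> = rho u ^ k * (\<Sum>j\<in>UNIV. cnj (u$j) * dzb j g u) - of_nat k * rho u ^ (k - 1) * g u * (1 - rho u)"
    by (simp add: sum_subtractf sum_distrib_left sum_coord_cnj_eq[symmetric])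
  finally show ?thesis
    unfolding Ebop_def using of_nat_mult_power_pred[of k "rho u"] by (auto simp: algebra_simps)
qed

lemma lap_rho_power_mult:
  fixes h :: "'n::finite cfun"
  assumes S: "open S" and h: "wirtinger_C2_on S h" and u: "u \<in> S"
  shows "lap (\<lambda>x. rho x ^ k * h x) u = rho u ^ k * lap h u
     - of_nat k * rho u ^ (k - 1) * (Eop 0 h u + Ebop 0 h u + of_nat CARD('n) * h u)
     + of_nat k * of_nat (k - 1) * rho u ^ (k - 2) * (1 - rho u) * h u"
proof -
  have step: "dz j (dzb j (\<lambda>x. rho x ^ k * h x)) u =
     rho u ^ k * dz j (dzb j h) u
     - (of_nat k * rho u ^ (k - 1)) * (cnj (u$j) * dzb j h u + u$j * dz j h u + h u)
     + (of_nat k * of_nat (k - 1) * rho u ^ (k - 2) * h u) * (u$j * cnj (u$j))" for j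
  proof -
    have "dz j (dzb j (\<lambda>x. rho x ^ k * h x)) u =
       dz j (\<lambda>x. rho x ^ k * dzb j h x - of_nat k * (rho x ^ (k - 1) * (x$j * h x))) u"
      using wirtinger_C2_onD(1)[OF h]
      by (intro dz_cong_open[OF S u]) (simp add: dzb_mult dzb_rho_power algebra_simps)
    also have "\<dots> = rho u ^ k * dz j (dzb j h) u + dz j (\<lambda>x. rho x ^ k) u * dzb j h u
       - of_nat k * (rho u ^ (k - 1) * (u$j * dz j h u + dz j (\<lambda>x. x$j) u * h u)
          + dz j (\<lambda>x. rho x ^ (k - 1)) u * (u$j * h u))"
      using wirtinger_C2_onD[OF h u]
      by (simp add: dz_diff dz_cmult dz_mult)
    finally show ?thesis by (simp add: dz_rho_power dz_coord algebra_simps numeral_2_eq_2)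
  qed
  have "lap (\<lambda>x. rho x ^ k * h x) u = rho u ^ k * lap h u
     - of_nat k * rho u ^ (k - 1) * (Ebop 0 h u + Eop 0 h u + of_nat CARD('n) * h u)
     + of_nat k * of_nat (k - 1) * rho u ^ (k - 2) * h u * (\<Sum>j\<in>UNIV. u$j * cnj (u$j))"
    unfolding lap_def step Eop_def Ebop_def
    by (simp add: sum.distrib sum_subtractf sum_distrib_left ring_distribs)
  then show ?thesis by (simp add: sum_coord_cnj_eq algebra_simps)
qed

lemma Qop_rho_power_mult:
  fixes h :: "'n::finite cfun"
  assumes S: "open S" and h: "wirtinger_C2_on S h" and u: "u \<in> S"
  shows "absE2 0 (\<lambda>x. rho x ^ k * h x) u - lap (\<lambda>x. rho x ^ k * h x) u =
     rho u ^ k * Qop k h u - of_nat k * (of_nat k - of_nat CARD('n)) * rho u ^ (k - 1) * h u"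
proof -
  have dE: "Ebop (real k) h differentiable (at u)" by (rule Ebop_differentiable[OF h u])
  have dh: "h differentiable (at u)" by (rule wirtinger_C2_onD(1)[OF h u])
  have "absE2 0 (\<lambda>x. rho x ^ k * h x) u =
     Eop 0 (\<lambda>x. rho x ^ k * Ebop (real k) h x - of_nat k * (rho x ^ (k - 1) * h x)) u"
    unfolding absE2_def
    by (rule Eop_cong_open[OF S u]) (simp add: Ebop_rho_power_mult wirtinger_C2_onD(1)[OF h])
  also have "\<dots> = rho u ^ k * absE2 (real k) h u - of_nat k * rho u ^ (k - 1) * Ebop (real k) h u
     - of_nat k * (rho u ^ (k - 1) * Eop (real (k - 1)) h u - of_nat (k - 1) * rho u ^ (k - 2) * h u)"
    using dE dh
    by (simp add: Eop_diff Eop_cmult Eop_rho_power_mult absE2_def numeral_2_eq_2)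
  finally show ?thesis
    unfolding lap_rho_power_mult[OF S h u] Qop_def Eop_def Ebop_def
    by (cases k rule: nat.exhaust[case_product nat.exhaust[of "k - 1"]])
      (simp_all add: algebra_simps)
qed

lemma invlap_eq: "invlap f u = - rho u * (absE2 0 f u - lap f u)"
  unfolding invlap_def rho_eq_norm by (simp add: algebra_simps)

lemma pprod_eq_rho_power_Qprod:
  fixes f :: "'n::finite cfun"
  assumes S: "open S" and C: "\<And>j. wirtinger_C2_on S (Qprod j f)"
  shows "u \<in> S \<Longrightarrow> pprod m f u = rho u ^ Suc m * Qprod m f u"
proof (induction m arbitrary: u)
  case 0
  then show ?case by (simp add: invlap_def Qop_def rho_eq_norm algebra_simps)
next
  case (Suc m)
  have "invlap (pprod m f) u = invlap (\<lambda>x. rho x ^ Suc m * Qprod m f x) u"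
    by (rule invlap_cong_open[OF S Suc.prems Suc.IH])
  also have "\<dots> = - rho u * (rho u ^ Suc m * Qop (Suc m) (Qprod m f) u
      - of_nat (Suc m) * (of_nat (Suc m) - of_nat CARD('n)) * rho u ^ m * Qprod m f u)"
    unfolding invlap_eq Qop_rho_power_mult[OF S C Suc.prems] by simp
  finally show ?case
    by (simp add: Let_def Suc.IH[OF Suc.prems] algebra_simps)
qed

section \<open>The kernel monomials\<close>

definition omega :: "complex^'n::finite \<Rightarrow> complex^'n \<Rightarrow> complex" where
  "omega a u = 1 - cinner u a"

definition omega_cnj :: "complex^'n::finite \<Rightarrow> complex^'n \<Rightarrow> complex" where
  "omega_cnj a u = 1 - cinner a u"

lemma omega_cnj_eq_cnj: "omega_cnj a u = cnj (omega a u)"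
  unfolding omega_def omega_cnj_def by (subst cinner_cnj_swap) simp

lemma omega_cnj_eq_omega_swap: "omega_cnj a u = omega u a"
  unfolding omega_def omega_cnj_def ..

lemma omega_cnj_nonzero: "omega a u \<noteq> 0 \<Longrightarrow> omega_cnj a u \<noteq> 0"
  by (simp add: omega_cnj_eq_cnj)

lemma has_derivative_omega: "(omega a has_derivative (\<lambda>h. - cinner h a)) (at u)"
  unfolding omega_def[abs_def] by (auto intro!: derivative_eq_intros)

lemma has_derivative_omega_cnj: "(omega_cnj a has_derivative (\<lambda>h. - cinner a h)) (at u)"
  unfolding omega_cnj_def[abs_def] by (auto intro!: derivative_eq_intros)

lemma omega_differentiable [simp]: "omega a differentiable (at u)"
  using has_derivative_omega unfolding differentiable_def by blast

lemma omega_cnj_differentiable [simp]: "omega_cnj a differentiable (at u)"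
  using has_derivative_omega_cnj unfolding differentiable_def by blast

lemma open_omega_nonzero: "open {x. omega a x \<noteq> 0}"
proof -
  have "continuous_on UNIV (omega a)"
    by (simp add: differentiable_at_imp_differentiable_on differentiable_imp_continuous_on)
  then show ?thesis by (simp add: open_Collect_neq)
qed

lemma norm_cinner_le: "cmod (cinner u v) \<le> norm u * norm v"
proof -
  have "cmod (cinner u v) \<le> (\<Sum>k\<in>UNIV. cmod (u$k) * cmod (v$k))"
    unfolding cinner_def by (rule order_trans[OF norm_sum]) (simp add: norm_mult)
  also have "\<dots> \<le> L2_set (\<lambda>k. cmod (u$k)) UNIV * L2_set (\<lambda>k. cmod (v$k)) UNIV"
    using L2_set_mult_ineq[of "\<lambda>k. cmod (u$k)" "\<lambda>k. cmod (v$k)" UNIV] by simp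
  finally show ?thesis by (simp add: norm_vec_def)
qed

lemma omega_nonzero:
  assumes "norm u < 1" "norm a < 1"
  shows "omega a u \<noteq> 0"
proof
  assume "omega a u = 0"
  then have "1 \<le> norm u * norm a"
    using norm_cinner_le[of u a] by (simp add: omega_def)
  moreover have "norm u * norm a \<le> norm u"
    using assms(2) by (simp add: mult_right_le_one_le)
  ultimately show False using assms(1) by simp
qed

definition kmono :: "complex^'n::finite \<Rightarrow> nat \<Rightarrow> nat \<Rightarrow> nat \<Rightarrow> 'n cfun" where
  "kmono a e p q u = rho u ^ e * inverse (omega a u) ^ p * inverse (omega_cnj a u) ^ q"

lemma kmono_differentiable: "omega a u \<noteq> 0 \<Longrightarrow> kmono a e p q differentiable (at u)"
  unfolding kmono_def[abs_def] using omega_cnj_nonzero[of a u]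
  by (intro differentiable_mult differentiable_power differentiable_inverse) auto

lemma dderiv_kmono:
  assumes "omega a u \<noteq> 0"
  shows "dderiv v (kmono a e p q) u =
     - of_nat e * (cinner v u + cinner u v) * kmono a (e - 1) p q u
     + of_nat p * cinner v a * kmono a e (Suc p) q u
     + of_nat q * cinner a v * kmono a e p (Suc q) u"
proof -
  have cnj_nz: "omega_cnj a u \<noteq> 0" using assms by (rule omega_cnj_nonzero)
  have R: "dderiv v (\<lambda>x. rho x ^ e) u = - of_nat e * rho u ^ (e - 1) * (cinner v u + cinner u v)"
    by (simp add: dderiv_power dderiv_eqI[OF has_derivative_rho] algebra_simps)
  have W: "dderiv v (\<lambda>x. inverse (omega a x) ^ p) u =
      of_nat p * inverse (omega a u) ^ Suc p * cinner v a"
    using assms by (simp add: dderiv_inverse_power dderiv_eqI[OF has_derivative_omega])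
  have W': "dderiv v (\<lambda>x. inverse (omega_cnj a x) ^ q) u =
      of_nat q * inverse (omega_cnj a u) ^ Suc q * cinner a v"
    using cnj_nz by (simp add: dderiv_inverse_power dderiv_eqI[OF has_derivative_omega_cnj])
  have "(\<lambda>x. inverse (omega a x) ^ p) differentiable (at u)"
    and "(\<lambda>x. inverse (omega_cnj a x) ^ q) differentiable (at u)"
    using assms cnj_nz by (auto intro!: differentiable_power differentiable_inverse)
  then show ?thesis
    unfolding kmono_def[abs_def] by (simp add: dderiv_mult R W W' algebra_simps)
qed

lemma dz_kmono:
  "omega a u \<noteq> 0 \<Longrightarrow> dz j (kmono a e p q) u =
     - of_nat e * cnj (u$j) * kmono a (e - 1) p q u + of_nat p * cnj (a$j) * kmono a e (Suc p) q u"
  unfolding dz_dderiv by (simp add: dderiv_kmono cinner_axis_left cinner_axis_right field_simps)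

lemma dzb_kmono:
  "omega a u \<noteq> 0 \<Longrightarrow> dzb j (kmono a e p q) u =
     - of_nat e * u$j * kmono a (e - 1) p q u + of_nat q * a$j * kmono a e p (Suc q) u"
  unfolding dzb_dderiv by (simp add: dderiv_kmono cinner_axis_left cinner_axis_right field_simps)

lemma rho_mult_kmono: "rho u * kmono a e p q u = kmono a (Suc e) p q u"
  unfolding kmono_def by simp

lemma rho_mult_kmono_pred:
  "of_nat e * (rho u * kmono a (e - 1) p q u) = of_nat e * kmono a e p q u"
  by (cases e) (simp_all add: rho_mult_kmono)

lemma omega_mult_kmono: "omega a u \<noteq> 0 \<Longrightarrow> omega a u * kmono a e (Suc p) q u = kmono a e p q u"
  unfolding kmono_def by (simp add: field_simps)

lemma omega_cnj_mult_kmono: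
  "omega a u \<noteq> 0 \<Longrightarrow> omega_cnj a u * kmono a e p (Suc q) u = kmono a e p q u"
  using omega_cnj_nonzero[of a u] unfolding kmono_def by (simp add: field_simps)

lemma sum_coord_products:
  fixes u a :: "complex^'n::finite"
  shows "(\<Sum>j\<in>UNIV. A * (u$j * cnj (u$j)) + B * (u$j * cnj (a$j)) + C * (a$j * cnj (u$j))
      + D * (a$j * cnj (a$j)) + E) =
    A * (1 - rho u) + B * (1 - omega a u) + C * (1 - omega_cnj a u) + D * (1 - rho a)
      + E * of_nat CARD('n)"
  by (simp add: sum.distrib sum_distrib_left[symmetric] rho_def omega_def omega_cnj_def cinner_def)

lemma Eop_kmono:
  assumes "omega a u \<noteq> 0"
  shows "Eop s (kmono a e p q) u = (of_real s + of_nat e - of_nat p) * kmono a e p q u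
     - of_nat e * kmono a (e - 1) p q u + of_nat p * kmono a e (Suc p) q u"
proof -
  have "(\<Sum>j\<in>UNIV. u$j * dz j (kmono a e p q) u) =
     (\<Sum>j\<in>UNIV. (- of_nat e * kmono a (e - 1) p q u) * (u$j * cnj (u$j))
        + (of_nat p * kmono a e (Suc p) q u) * (u$j * cnj (a$j))
        + 0 * (a$j * cnj (u$j)) + 0 * (a$j * cnj (a$j)) + 0)"
    using assms by (intro sum.cong) (simp_all add: dz_kmono algebra_simps)
  then show ?thesis
    unfolding Eop_def sum_coord_products
    using rho_mult_kmono_pred[of e u a p q] omega_mult_kmono[OF assms, of e p q]
    by (simp add: algebra_simps)
qed

lemma Ebop_kmono:
  assumes "omega a u \<noteq> 0"
  shows "Ebop s (kmono a e p q) u = (of_real s + of_nat e - of_nat q) * kmono a e p q u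
     - of_nat e * kmono a (e - 1) p q u + of_nat q * kmono a e p (Suc q) u"
proof -
  have "(\<Sum>j\<in>UNIV. cnj (u$j) * dzb j (kmono a e p q) u) =
     (\<Sum>j\<in>UNIV. (- of_nat e * kmono a (e - 1) p q u) * (u$j * cnj (u$j))
        + 0 * (u$j * cnj (a$j)) + (of_nat q * kmono a e p (Suc q) u) * (a$j * cnj (u$j))
        + 0 * (a$j * cnj (a$j)) + 0)"
    using assms by (intro sum.cong) (simp_all add: dzb_kmono algebra_simps)
  then show ?thesis
    unfolding Ebop_def sum_coord_products
    using rho_mult_kmono_pred[of e u a p q] omega_cnj_mult_kmono[OF assms, of e p q]
    by (simp add: algebra_simps)
qed

lemma dz_dzb_kmono:
  assumes W: "omega a u \<noteq> 0"
  shows "dz j (dzb j (kmono a e p q)) u =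
      of_nat q * a$j * (- of_nat e * cnj (u$j) * kmono a (e - 1) p (Suc q) u
        + of_nat p * cnj (a$j) * kmono a e (Suc p) (Suc q) u)
    - of_nat e * (u$j * (- of_nat (e - 1) * cnj (u$j) * kmono a (e - 2) p q u
        + of_nat p * cnj (a$j) * kmono a (e - 1) (Suc p) q u) + kmono a (e - 1) p q u)"
proof -
  have S: "u \<in> {x. omega a x \<noteq> 0}" using W by simp
  have "dz j (dzb j (kmono a e p q)) u =
      dz j (\<lambda>x. (of_nat q * a$j) * kmono a e p (Suc q) x - of_nat e * (x$j * kmono a (e - 1) p q x)) u"
    by (rule dz_cong_open[OF open_omega_nonzero S]) (simp add: dzb_kmono algebra_simps)
  also have "\<dots> = of_nat q * a$j * dz j (kmono a e p (Suc q)) u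
      - of_nat e * (u$j * dz j (kmono a (e - 1) p q) u + dz j (\<lambda>x. x$j) u * kmono a (e - 1) p q u)"
    using kmono_differentiable[OF W] by (simp add: dz_diff dz_cmult dz_mult)
  finally show ?thesis by (simp add: dz_kmono W dz_coord numeral_2_eq_2)
qed

lemma lap_kmono:
  fixes u a :: "complex^'n::finite"
  assumes W: "omega a u \<noteq> 0"
  shows "lap (kmono a e p q) u =
      of_nat e * of_nat (e - 1) * (kmono a (e - 2) p q u - kmono a (e - 1) p q u)
    - of_nat e * of_nat p * (kmono a (e - 1) (Suc p) q u - kmono a (e - 1) p q u)
    - of_nat e * of_nat q * (kmono a (e - 1) p (Suc q) u - kmono a (e - 1) p q u)
    + of_nat p * of_nat q * (1 - rho a) * kmono a e (Suc p) (Suc q) u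
    - of_nat e * of_nat CARD('n) * kmono a (e - 1) p q u"
proof -
  have "lap (kmono a e p q) u =
     (\<Sum>j\<in>UNIV. (of_nat e * of_nat (e - 1) * kmono a (e - 2) p q u) * (u$j * cnj (u$j))
        + (- of_nat e * of_nat p * kmono a (e - 1) (Suc p) q u) * (u$j * cnj (a$j))
        + (- of_nat e * of_nat q * kmono a (e - 1) p (Suc q) u) * (a$j * cnj (u$j))
        + (of_nat p * of_nat q * kmono a e (Suc p) (Suc q) u) * (a$j * cnj (a$j))
        + (- of_nat e * kmono a (e - 1) p q u))"
    unfolding lap_def by (intro sum.cong) (simp_all add: dz_dzb_kmono[OF W] algebra_simps)
  also have "\<dots> = of_nat e * of_nat (e - 1) * ((1 - rho u) * kmono a (e - 2) p q u)
    - of_nat e * of_nat p * ((1 - omega a u) * kmono a (e - 1) (Suc p) q u)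
    - of_nat e * of_nat q * ((1 - omega_cnj a u) * kmono a (e - 1) p (Suc q) u)
    + of_nat p * of_nat q * (1 - rho a) * kmono a e (Suc p) (Suc q) u
    - of_nat e * of_nat CARD('n) * kmono a (e - 1) p q u"
    unfolding sum_coord_products by (simp add: algebra_simps)
  also have "\<dots> = of_nat e * of_nat (e - 1) * (kmono a (e - 2) p q u - kmono a (e - 1) p q u)
    - of_nat e * of_nat p * (kmono a (e - 1) (Suc p) q u - kmono a (e - 1) p q u)
    - of_nat e * of_nat q * (kmono a (e - 1) p (Suc q) u - kmono a (e - 1) p q u)
    + of_nat p * of_nat q * (1 - rho a) * kmono a e (Suc p) (Suc q) u
    - of_nat e * of_nat CARD('n) * kmono a (e - 1) p q u"
    using rho_mult_kmono_pred[of "e - 1" u a p q] omega_mult_kmono[OF W, of "e - 1" p q]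
      omega_cnj_mult_kmono[OF W, of "e - 1" p q]
    by (auto simp: algebra_simps numeral_2_eq_2)
  finally show ?thesis .
qed

lemma Qop_kmono_diagonal:
  fixes u a :: "complex^'n::finite" and k e :: nat
  assumes W: "omega a u \<noteq> 0"
  defines "p \<equiv> k + e"
  shows "Qop k (kmono a e p p) u = of_nat p ^ 2 * rho a * kmono a e (Suc p) (Suc p) u
     - of_nat e * (2 * of_nat k + of_nat e - of_nat CARD('n)) * kmono a (e - 1) p p u"
proof -
  have S: "u \<in> {x. omega a x \<noteq> 0}" using W by simp
  have "absE2 (real k) (kmono a e p p) u =
      Eop (real k) (\<lambda>x. of_nat p * kmono a e p (Suc p) x - of_nat e * kmono a (e - 1) p p x) u"
    unfolding absE2_def
    by (rule Eop_cong_open[OF open_omega_nonzero S]) (simp add: Ebop_kmono p_def)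
  also have "\<dots> = of_nat p * Eop (real k) (kmono a e p (Suc p)) u
      - of_nat e * Eop (real k) (kmono a (e - 1) p p) u"
    using kmono_differentiable[OF W] by (simp add: Eop_diff Eop_cmult)
  finally have "absE2 (real k) (kmono a e p p) u =
      of_nat p * ((of_nat k + of_nat e - of_nat p) * kmono a e p (Suc p) u
        - of_nat e * kmono a (e - 1) p (Suc p) u + of_nat p * kmono a e (Suc p) (Suc p) u)
    - of_nat e * ((of_nat k + of_nat (e - 1) - of_nat p) * kmono a (e - 1) p p u
        - of_nat (e - 1) * kmono a (e - 2) p p u + of_nat p * kmono a (e - 1) (Suc p) p u)"
    by (simp add: Eop_kmono W numeral_2_eq_2)
  then show ?thesis
    unfolding Qop_def lap_kmono[OF W] p_def
    by (cases e) (simp_all add: algebra_simps power2_eq_square)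
qed

lemma wirtinger_C2_on_kmono: "wirtinger_C2_on {x. omega a x \<noteq> 0} (kmono a e p q)"
  unfolding wirtinger_C2_on_def
proof (intro ballI conjI allI)
  fix u j assume u: "u \<in> {x. omega a x \<noteq> 0}"
  have dk: "kmono a e p q differentiable (at u)" for e p q
    using u by (simp add: kmono_differentiable)
  then show "kmono a e p q differentiable (at u)" .
  have dz_rhs: "(\<lambda>x. - of_nat e * cnj (x$j) * kmono a (e - 1) p q x
      + of_nat p * cnj (a$j) * kmono a e (Suc p) q x) differentiable (at u)"
    using dk by (simp add: differentiable_cnj_iff)
  show "dz j (kmono a e p q) differentiable (at u)"
    by (rule differentiable_cong_open[OF open_omega_nonzero u _ dz_rhs]) (simp add: dz_kmono)
  have dzb_rhs: "(\<lambda>x. - of_nat e * x$j * kmono a (e - 1) p q x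
      + of_nat q * a$j * kmono a e p (Suc q) x) differentiable (at u)"
    using dk by simp
  show "dzb j (kmono a e p q) differentiable (at u)"
    by (rule differentiable_cong_open[OF open_omega_nonzero u _ dzb_rhs]) (simp add: dzb_kmono)
qed

definition Qprod_kernel :: "complex^'n::finite \<Rightarrow> nat \<Rightarrow> 'n cfun" where
  "Qprod_kernel a j u =
     of_nat (fact j)^2 * rho a ^ j * of_nat (Suc j) * (of_nat CARD('n) - 1 - of_nat j)
       * kmono a 0 (Suc j) (Suc j) u
     + of_nat (fact (Suc j))^2 * rho a ^ Suc j * kmono a 1 (Suc (Suc j)) (Suc (Suc j)) u"

lemma wirtinger_C2_on_Qprod_kernel: "wirtinger_C2_on {x. omega a x \<noteq> 0} (Qprod_kernel a j)"
  unfolding Qprod_kernel_def[abs_def]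
  by (rule wirtinger_C2_on_lincomb[OF open_omega_nonzero wirtinger_C2_on_kmono wirtinger_C2_on_kmono])

lemma Qprod_kmono_kernel:
  fixes a :: "complex^'n::finite"
  shows "omega a u \<noteq> 0 \<Longrightarrow> Qprod j (kmono a 1 1 1) u = Qprod_kernel a j u"
proof (induction j arbitrary: u)
  case 0
  then show ?case
    using Qop_kmono_diagonal[of a u 0 1] by (simp add: Qprod_kernel_def algebra_simps)
next
  case (Suc j)
  have S: "u \<in> {x. omega a x \<noteq> 0}" using Suc.prems by simp
  have Q0: "Qop (Suc j) (kmono a 0 (Suc j) (Suc j)) u =
      of_nat (Suc j)^2 * rho a * kmono a 0 (Suc (Suc j)) (Suc (Suc j)) u"
    using Qop_kmono_diagonal[OF Suc.prems, of "Suc j" 0] by simp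
  have Q1: "Qop (Suc j) (kmono a 1 (Suc (Suc j)) (Suc (Suc j))) u =
      of_nat (Suc (Suc j))^2 * rho a * kmono a 1 (Suc (Suc (Suc j))) (Suc (Suc (Suc j))) u
      - (2 * of_nat (Suc j) + 1 - of_nat CARD('n)) * kmono a 0 (Suc (Suc j)) (Suc (Suc j)) u"
    using Qop_kmono_diagonal[OF Suc.prems, of "Suc j" 1] by simp
  have "Qprod (Suc j) (kmono a 1 1 1) u = Qop (Suc j) (Qprod_kernel a j) u"
    using Suc.IH by (auto intro: Qop_cong_open[OF open_omega_nonzero S])
  also have "\<dots> = Qprod_kernel a (Suc j) u"
    unfolding Qprod_kernel_def[abs_def]
    by (subst Qop_lincomb[OF open_omega_nonzero wirtinger_C2_on_kmono wirtinger_C2_on_kmono S])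
      (simp only: Q0 Q1, simp add: algebra_simps power2_eq_square)
  finally show ?case .
qed

lemma rho_power_mult_kmono_swap: "rho a ^ e * kmono a e' p p u = rho u ^ e' * kmono u e p p a"
  unfolding kmono_def omega_cnj_eq_omega_swap by (simp add: ac_simps)

lemma Qprod_kernel_swap:
  fixes z \<xi> :: "complex^'n::finite"
  assumes "omega \<xi> z \<noteq> 0"
  shows "Qprod_kernel z m \<xi> = of_nat (fact m)^2 * Qop 0 (kmono \<xi> (Suc m) (Suc m) (Suc m)) z"
proof -
  have swap0: "rho z ^ m * kmono z 0 (Suc m) (Suc m) \<xi> = kmono \<xi> m (Suc m) (Suc m) z"
    using rho_power_mult_kmono_swap[of z m 0 "Suc m" \<xi>] by simp
  have swap1: "rho z ^ Suc m * kmono z 1 (Suc (Suc m)) (Suc (Suc m)) \<xi>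
      = rho \<xi> * kmono \<xi> (Suc m) (Suc (Suc m)) (Suc (Suc m)) z"
    using rho_power_mult_kmono_swap[of z "Suc m" 1 "Suc (Suc m)" \<xi>] by simp
  have "Qprod_kernel z m \<xi> = of_nat (fact m)^2 *
      (of_nat (Suc m) * (of_nat CARD('n) - 1 - of_nat m) * (rho z ^ m * kmono z 0 (Suc m) (Suc m) \<xi>)
       + of_nat (Suc m)^2 * (rho z ^ Suc m * kmono z 1 (Suc (Suc m)) (Suc (Suc m)) \<xi>))"
    unfolding Qprod_kernel_def by (simp add: algebra_simps power2_eq_square)
  also have "\<dots> = of_nat (fact m)^2 * Qop 0 (kmono \<xi> (Suc m) (Suc m) (Suc m)) z"
  proof -
    have Q: "Qop 0 (kmono \<xi> (Suc m) (Suc m) (Suc m)) z =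
        of_nat (Suc m)^2 * rho \<xi> * kmono \<xi> (Suc m) (Suc (Suc m)) (Suc (Suc m)) z
        - of_nat (Suc m) * (of_nat (Suc m) - of_nat CARD('n)) * kmono \<xi> m (Suc m) (Suc m) z"
      using Qop_kmono_diagonal[OF assms, of 0 "m + 1"] by simp
    show ?thesis unfolding swap0 swap1 Q by (simp add: algebra_simps)
  qed
  finally show ?thesis .
qed

lemma kernel_eq_kmono:
  "(\<lambda>w. complex_of_real ((1 - (norm w)^2) / (cmod (1 - cinner z w))^2)) = kmono z 1 1 1"
proof
  fix w
  have "complex_of_real ((cmod (omega_cnj z w))^2) = omega_cnj z w * omega z w"
    unfolding complex_norm_square by (simp add: omega_cnj_eq_cnj)
  then have "complex_of_real ((cmod (1 - cinner z w))^2) = omega_cnj z w * omega z w"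
    by (simp only: omega_cnj_def)
  then show "complex_of_real ((1 - (norm w)^2) / (cmod (1 - cinner z w))^2) = kmono z 1 1 1 w"
    unfolding kmono_def rho_eq_norm by (simp add: field_simps)
qed

lemma weighted_kernel_eq_kmono:
  "(\<lambda>u. complex_of_real ((1 - (norm u)^2) ^ (m + 1) / (cmod (1 - cinner u \<xi>)) ^ (2 * (m + 1))))
     = kmono \<xi> (m + 1) (m + 1) (m + 1)"
proof
  fix u
  have "complex_of_real ((cmod (omega \<xi> u))^2) = omega \<xi> u * omega_cnj \<xi> u"
    unfolding complex_norm_square by (simp add: omega_cnj_eq_cnj)
  then have "complex_of_real ((cmod (1 - cinner u \<xi>)) ^ (2 * (m + 1))) = (omega \<xi> u * omega_cnj \<xi> u) ^ (m + 1)"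
    unfolding power_mult of_real_power by (simp only: omega_def)
  then show "complex_of_real ((1 - (norm u)^2) ^ (m + 1) / (cmod (1 - cinner u \<xi>)) ^ (2 * (m + 1)))
      = kmono \<xi> (m + 1) (m + 1) (m + 1) u"
    unfolding of_real_divide of_real_power kmono_def rho_eq_norm
    by (simp add: divide_inverse power_mult_distrib power_inverse mult.assoc)
qed

lemma pm_op_kernel:
  fixes z \<xi> :: "complex^'n::finite"
  assumes z: "norm z < 1" and \<xi>: "norm \<xi> < 1"
  shows "of_real (1 / (1 - (norm \<xi>)^2) ^ (m + 1)) *
      pm_op m (\<lambda>w. of_real ((1 - (norm w)^2) / (cmod (1 - cinner z w))^2)) \<xi>
    = Qop 0 (\<lambda>u. of_real ((1 - (norm u)^2) ^ (m + 1) / (cmod (1 - cinner u \<xi>)) ^ (2 * (m + 1)))) z"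
proof -
  have S: "\<xi> \<in> {x. omega z x \<noteq> 0}" using omega_nonzero[OF \<xi> z] by simp
  have C: "wirtinger_C2_on {x. omega z x \<noteq> 0} (Qprod j (kmono z 1 1 1))" for j
    by (rule wirtinger_C2_on_cong_open[OF open_omega_nonzero _ wirtinger_C2_on_Qprod_kernel[of z j]])
      (simp add: Qprod_kmono_kernel[simplified])
  have "pm_op m (kmono z 1 1 1) \<xi> = rho \<xi> ^ Suc m * Qprod_kernel z m \<xi> / of_nat (fact m)^2"
    unfolding pm_op_def pprod_eq_rho_power_Qprod[OF open_omega_nonzero C S]
      Qprod_kmono_kernel[OF omega_nonzero[OF \<xi> z]] ..
  moreover note Qprod_kernel_swap[OF omega_nonzero[OF z \<xi>], of m]
  ultimately have "pm_op m (kmono z 1 1 1) \<xi> = rho \<xi> ^ Suc m * Qop 0 (kmono \<xi> (Suc m) (Suc m) (Suc m)) z"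
    by simp
  moreover have "complex_of_real (1 / (1 - (norm \<xi>)^2) ^ (m + 1)) = 1 / rho \<xi> ^ Suc m"
    by (simp add: rho_eq_norm)
  ultimately show ?thesis
    unfolding kernel_eq_kmono weighted_kernel_eq_kmono using rho_nonzero[OF \<xi>] by simp
qed

section \<open>Smooth functions\<close>

lemma Ck_on_cong_open:
  fixes f g :: "'n::finite cfun"
  assumes S: "open S"
  shows "(\<And>x. x \<in> S \<Longrightarrow> f x = g x) \<Longrightarrow> Ck_on k S f \<Longrightarrow> Ck_on k S g"
proof (induction k arbitrary: f g)
  case 0
  then show ?case using continuous_on_cong by (metis Ck_on.simps(1))
next
  case (Suc k)
  then have f: "f differentiable_on S" "continuous_on S f"
    "\<And>v. Ck_on k S (\<lambda>z. frechet_derivative f (at z) v)"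
    by auto
  have "g differentiable_on S"
    using differentiable_cong_open[OF S _ Suc.prems(1)] f(1) S
    by (simp add: differentiable_on_eq_differentiable_at)
  moreover have "continuous_on S g" using f(2) Suc.prems(1) continuous_on_cong by metis
  moreover have "Ck_on k S (\<lambda>z. frechet_derivative g (at z) v)" for v
    by (rule Suc.IH[OF _ f(3)]) (simp add: frechet_derivative_cong_open[OF S _ Suc.prems(1)])
  ultimately show ?case by simp
qed

lemma Ck_on_SucD: "Ck_on (Suc k) S f \<Longrightarrow> Ck_on k S f"
proof (induction k arbitrary: f)
  case (Suc k)
  then show ?case by (simp only: Ck_on.simps(2)) blast
qed simp

lemma Ck_on_const: "Ck_on k S (\<lambda>x. c)"
  by (induction k arbitrary: c) simp_all

lemma Ck_on_add:
  fixes f g :: "'n::finite cfun"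
  assumes S: "open S"
  shows "Ck_on k S f \<Longrightarrow> Ck_on k S g \<Longrightarrow> Ck_on k S (\<lambda>x. f x + g x)"
proof (induction k arbitrary: f g)
  case 0
  then show ?case by (simp add: continuous_on_add)
next
  case (Suc k)
  then have f: "f differentiable_on S" "continuous_on S f" "\<And>v. Ck_on k S (dderiv v f)"
    and g: "g differentiable_on S" "continuous_on S g" "\<And>v. Ck_on k S (dderiv v g)"
    by (auto simp: dderiv_def[abs_def])
  have "Ck_on k S (dderiv v (\<lambda>x. f x + g x))" for v
    using f(1) g(1) S
    by (intro Ck_on_cong_open[OF S _ Suc.IH[OF f(3) g(3)]])
      (simp add: dderiv_add differentiable_on_eq_differentiable_at)
  then show ?case using f g by (simp add: continuous_on_add dderiv_def[abs_def])
qed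

lemma Ck_on_mult:
  fixes f g :: "'n::finite cfun"
  assumes S: "open S"
  shows "Ck_on k S f \<Longrightarrow> Ck_on k S g \<Longrightarrow> Ck_on k S (\<lambda>x. f x * g x)"
proof (induction k arbitrary: f g)
  case 0
  then show ?case by (simp add: continuous_on_mult)
next
  case (Suc k)
  then have f: "f differentiable_on S" "continuous_on S f" "\<And>v. Ck_on k S (dderiv v f)"
    and g: "g differentiable_on S" "continuous_on S g" "\<And>v. Ck_on k S (dderiv v g)"
    by (auto simp: dderiv_def[abs_def])
  have fk: "Ck_on k S f" and gk: "Ck_on k S g" using Suc.prems by (simp_all only: Ck_on_SucD)
  have prod: "Ck_on k S (\<lambda>x. f x * dderiv v g x + dderiv v f x * g x)" for v
    using Ck_on_add[OF S Suc.IH[OF fk g(3)] Suc.IH[OF f(3) gk]] .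
  have "Ck_on k S (dderiv v (\<lambda>x. f x * g x))" for v
  proof (rule Ck_on_cong_open[OF S _ prod])
    fix x assume "x \<in> S"
    then show "f x * dderiv v g x + dderiv v f x * g x = dderiv v (\<lambda>x. f x * g x) x"
      using f(1) g(1) S by (simp add: dderiv_mult differentiable_on_eq_differentiable_at)
  qed
  then show ?case using f g by (simp add: continuous_on_mult dderiv_def[abs_def])
qed

lemma Ck_on_bounded_linear: "bounded_linear L \<Longrightarrow> Ck_on k S (L :: 'n::finite cfun)"
proof (cases k)
  case (Suc k')
  assume L: "bounded_linear L"
  then have "frechet_derivative L (at z) = L" for z
    by (simp add: bounded_linear_imp_has_derivative frechet_derivative_at[symmetric])
  with Suc L show ?thesis
    by (simp add: Ck_on_const linear_continuous_on bounded_linear_imp_differentiable_on)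
qed (simp add: linear_continuous_on)

lemma Ck_on_sum:
  fixes f :: "'i \<Rightarrow> 'n::finite cfun"
  assumes S: "open S"
  shows "finite I \<Longrightarrow> (\<And>i. i \<in> I \<Longrightarrow> Ck_on k S (f i)) \<Longrightarrow> Ck_on k S (\<lambda>x. \<Sum>i\<in>I. f i x)"
  by (induction I rule: finite_induct) (simp_all add: Ck_on_const Ck_on_add[OF S])

lemma smooth_on_add: "open S \<Longrightarrow> smooth_on S f \<Longrightarrow> smooth_on S g \<Longrightarrow> smooth_on S (\<lambda>x. f x + g x)"
  unfolding smooth_on_def by (blast intro: Ck_on_add)

lemma smooth_on_mult: "open S \<Longrightarrow> smooth_on S f \<Longrightarrow> smooth_on S g \<Longrightarrow> smooth_on S (\<lambda>x. f x * g x)"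
  unfolding smooth_on_def by (blast intro: Ck_on_mult)

lemma smooth_on_const: "smooth_on S (\<lambda>x. c)"
  unfolding smooth_on_def by (blast intro: Ck_on_const)

lemma smooth_on_bounded_linear: "bounded_linear L \<Longrightarrow> smooth_on S L"
  unfolding smooth_on_def by (blast intro: Ck_on_bounded_linear)

lemma smooth_on_sum:
  "open S \<Longrightarrow> finite I \<Longrightarrow> (\<And>i. i \<in> I \<Longrightarrow> smooth_on S (f i)) \<Longrightarrow> smooth_on S (\<lambda>x. \<Sum>i\<in>I. f i x)"
  unfolding smooth_on_def by (blast intro: Ck_on_sum)

lemma smooth_on_dderiv: "smooth_on S f \<Longrightarrow> smooth_on S (dderiv v f)"
  unfolding smooth_on_def dderiv_def[abs_def] using Ck_on.simps(2) by blast

lemma smooth_on_coord: "smooth_on S (\<lambda>x. x$j)"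
  by (rule smooth_on_bounded_linear[OF bounded_linear_vec_nth])

lemma smooth_on_cnj_coord: "smooth_on S (\<lambda>x. cnj (x$j))"
  by (rule smooth_on_bounded_linear[OF bounded_linear_compose[OF bounded_linear_cnj bounded_linear_vec_nth]])

lemma smooth_on_dz:
  assumes "open S" "smooth_on S f"
  shows "smooth_on S (dz j f)"
proof -
  have eq: "dz j f = (\<lambda>z. 1/2 * dderiv (axis j 1) f z + (-\<i>/2) * dderiv (axis j \<i>) f z)"
    by (simp add: fun_eq_iff dz_dderiv field_simps)
  show ?thesis
    unfolding eq using assms by (intro smooth_on_add smooth_on_mult smooth_on_const smooth_on_dderiv)
qed

lemma smooth_on_dzb:
  assumes "open S" "smooth_on S f"
  shows "smooth_on S (dzb j f)"
proof -
  have eq: "dzb j f = (\<lambda>z. 1/2 * dderiv (axis j 1) f z + (\<i>/2) * dderiv (axis j \<i>) f z)"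
    by (simp add: fun_eq_iff dzb_dderiv field_simps)
  show ?thesis
    unfolding eq using assms by (intro smooth_on_add smooth_on_mult smooth_on_const smooth_on_dderiv)
qed

lemma smooth_on_Eop: "open S \<Longrightarrow> smooth_on S f \<Longrightarrow> smooth_on S (Eop s f)"
  unfolding Eop_def[abs_def]
  by (intro smooth_on_add smooth_on_mult smooth_on_sum smooth_on_const smooth_on_coord smooth_on_dz) auto

lemma smooth_on_Ebop: "open S \<Longrightarrow> smooth_on S f \<Longrightarrow> smooth_on S (Ebop s f)"
  unfolding Ebop_def[abs_def]
  by (intro smooth_on_add smooth_on_mult smooth_on_sum smooth_on_const smooth_on_cnj_coord smooth_on_dzb) auto

lemma smooth_on_Qop:
  assumes "open S" "smooth_on S f"
  shows "smooth_on S (Qop k f)"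
proof -
  have eq: "Qop k f = (\<lambda>z. Eop (real k) (Ebop (real k) f) z + (-1) * (\<Sum>j\<in>UNIV. dz j (dzb j f) z))"
    by (simp add: fun_eq_iff Qop_def absE2_def lap_def)
  show ?thesis
    unfolding eq using assms
    by (intro smooth_on_add smooth_on_mult smooth_on_sum smooth_on_const smooth_on_Eop smooth_on_Ebop
        smooth_on_dz smooth_on_dzb) auto
qed

lemma smooth_on_Qprod: "open S \<Longrightarrow> smooth_on S f \<Longrightarrow> smooth_on S (Qprod j f)"
  by (induction j) (simp_all add: smooth_on_Qop)

lemma smooth_on_imp_wirtinger_C2_on:
  assumes S: "open S" and f: "smooth_on S f"
  shows "wirtinger_C2_on S f"
proof -
  have "g differentiable (at u)" if "smooth_on S g" "u \<in> S" for g u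
    using that S Ck_on.simps(2)[of 0 S g]
    by (auto simp: smooth_on_def differentiable_on_eq_differentiable_at)
  then show ?thesis
    unfolding wirtinger_C2_on_def using f smooth_on_dz[OF S f] smooth_on_dzb[OF S f] by blast
qed

theorem lemma2p2:
  fixes m :: nat
  assumes "m \<ge> 1"
  shows "(\<forall>z \<in> ball (0::complex^'n::finite) 1. \<forall>\<xi> \<in> ball 0 1.
            of_real (1 / (1 - (norm \<xi>)^2) ^ (m + 1)) *
              pm_op m (\<lambda>w. of_real ((1 - (norm w)^2) / (cmod (1 - cinner z w))^2)) \<xi>
          = absE2 0 (\<lambda>u. of_real ((1 - (norm u)^2) ^ (m + 1) / (cmod (1 - cinner u \<xi>)) ^ (2 * (m + 1)))) z
            - lap (\<lambda>u. of_real ((1 - (norm u)^2) ^ (m + 1) / (cmod (1 - cinner u \<xi>)) ^ (2 * (m + 1)))) z)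
       \<and> (\<forall>f :: 'n cfun. smooth_on (ball 0 1) f \<longrightarrow> (\<forall>\<xi> \<in> ball 0 1.
            (of_nat (fact m))^2 * of_real (1 / (1 - (norm \<xi>)^2) ^ (m + 1)) * pm_op m f \<xi>
          = Qprod m f \<xi>))"
proof (intro conjI ballI allI impI)
  fix z \<xi> :: "complex^'n"
  assume "z \<in> ball 0 1" "\<xi> \<in> ball 0 1"
  then show "of_real (1 / (1 - (norm \<xi>)^2) ^ (m + 1)) *
      pm_op m (\<lambda>w. of_real ((1 - (norm w)^2) / (cmod (1 - cinner z w))^2)) \<xi>
    = absE2 0 (\<lambda>u. of_real ((1 - (norm u)^2) ^ (m + 1) / (cmod (1 - cinner u \<xi>)) ^ (2 * (m + 1)))) z
      - lap (\<lambda>u. of_real ((1 - (norm u)^2) ^ (m + 1) / (cmod (1 - cinner u \<xi>)) ^ (2 * (m + 1)))) z"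
    using pm_op_kernel[of z \<xi> m] by (simp add: Qop_def)
next
  fix f :: "'n cfun" and \<xi> :: "complex^'n"
  assume f: "smooth_on (ball 0 1) f" and \<xi>: "\<xi> \<in> ball 0 1"
  have C: "wirtinger_C2_on (ball 0 1) (Qprod j f)" for j
    by (intro smooth_on_imp_wirtinger_C2_on smooth_on_Qprod f open_ball)
  have "pm_op m f \<xi> = rho \<xi> ^ Suc m * Qprod m f \<xi> / of_nat (fact m)^2"
    unfolding pm_op_def pprod_eq_rho_power_Qprod[OF open_ball C \<xi>] ..
  then show "(of_nat (fact m))^2 * of_real (1 / (1 - (norm \<xi>)^2) ^ (m + 1)) * pm_op m f \<xi> = Qprod m f \<xi>"
    using rho_nonzero[of \<xi>] \<xi> by (simp add: rho_eq_norm)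
qed

end
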